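(* Let $X$ be a Hausdorff compactum, $G$ an abelian group, and $n\in\mathcal H_{X,G}$. Then there exist closed sets $F\subset K\subset X$ such that $K$ is an $(n-1)$-homology membrane spanned on $F$ for some nontrivial element of $H_{n-1}(F;G)$.
   Context: $H_k(\cdot;G)$ is reduced Čech homology; $i^k_{A,K}$ denotes the inclusion-induced homomorphism. $\mathcal H_{X,G}$ is the set of integers $k\ge1$ such that there exist a closed $F\subset X$ and a nontrivial $\gamma\in H_{k-1}(F;G)$ with $i^{k-1}_{F,X}(\gamma)=0$. For closed $B\subset K$, $K$ is an $(n-1)$-homology membrane spanned on $B$ for $\gamma\in H_{n-1}(B;G)$ if $i^{n-1}_{B,K}(\gamma)=0$ but $i^{n-1}_{B,K'}(\gamma)\ne0$ for every proper closed subset $K'\subsetneq K$ containing $B$. *)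

theory Defs
  imports "HOL-Analysis.Analysis"
begin

text \<open>Reduced Cech homology of (closed subsets of) a compact space, with coefficients
in an abelian group 'g, computed as the inverse limit over finite open covers of the
reduced ordered simplicial homology of the nerves.  A vertex of the nerve of a cover
is a member of the cover; an ordered k-simplex is a list of k+1 members with nonempty
common intersection.\<close>

definition ocover :: "'a topology \<Rightarrow> 'a set \<Rightarrow> 'a set set \<Rightarrow> bool" where
  "ocover T A U \<longleftrightarrow> finite U \<and> (\<forall>W\<in>U. openin (subtopology T A) W) \<and> \<Union>U = A"

definition nsimp :: "'a set set \<Rightarrow> nat \<Rightarrow> 'a set list \<Rightarrow> bool" where
  "nsimp U k s \<longleftrightarrow> length s = Suc k \<and> set s \<subseteq> U \<and> \<Inter>(set s) \<noteq> {}"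

definition chains :: "'a set set \<Rightarrow> nat \<Rightarrow> ('a set list \<Rightarrow> 'g::ab_group_add) set" where
  "chains U k = {c. \<forall>s. c s \<noteq> 0 \<longrightarrow> nsimp U k s}"

definition del_at :: "nat \<Rightarrow> 'b list \<Rightarrow> 'b list" where
  "del_at i s = take i s @ drop (Suc i) s"

text \<open>Boundary from degree k+1 to degree k.\<close>
definition bd :: "'a set set \<Rightarrow> nat \<Rightarrow> ('a set list \<Rightarrow> 'g::ab_group_add) \<Rightarrow> ('a set list \<Rightarrow> 'g)" where
  "bd U k c = (\<lambda>t. \<Sum>i\<in>{..Suc k}. \<Sum>s\<in>{s. nsimp U (Suc k) s \<and> del_at i s = t}.
                   (if even i then c s else - c s))"

text \<open>Reduced cycles: in degree 0 the kernel of the augmentation.\<close>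
definition cycles :: "'a set set \<Rightarrow> nat \<Rightarrow> ('a set list \<Rightarrow> 'g::ab_group_add) set" where
  "cycles U k = (case k of
      0 \<Rightarrow> {c \<in> chains U 0. (\<Sum>s\<in>{s. nsimp U 0 s}. c s) = 0}
    | Suc j \<Rightarrow> {c \<in> chains U (Suc j). bd U j c = (\<lambda>_. 0)})"

definition bdries :: "'a set set \<Rightarrow> nat \<Rightarrow> ('a set list \<Rightarrow> 'g::ab_group_add) set" where
  "bdries U k = bd U k ` chains U (Suc k)"

definition hclass :: "'a set set \<Rightarrow> nat \<Rightarrow> ('a set list \<Rightarrow> 'g::ab_group_add) \<Rightarrow> ('a set list \<Rightarrow> 'g) set" where
  "hclass U k z = {z'. z' \<in> cycles U k \<and> (\<lambda>s. z' s - z s) \<in> bdries U k}"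

definition hgroup :: "'a set set \<Rightarrow> nat \<Rightarrow> ('a set list \<Rightarrow> 'g::ab_group_add) set set" where
  "hgroup U k = hclass U k ` cycles U k"

definition chmap :: "'a set set \<Rightarrow> ('a set \<Rightarrow> 'a set) \<Rightarrow> nat \<Rightarrow> ('a set list \<Rightarrow> 'g::ab_group_add) \<Rightarrow> ('a set list \<Rightarrow> 'g)" where
  "chmap V p k c = (\<lambda>t. \<Sum>s\<in>{s. nsimp V k s \<and> map p s = t}. c s)"

definition hmap :: "'a set set \<Rightarrow> 'a set set \<Rightarrow> ('a set \<Rightarrow> 'a set) \<Rightarrow> nat \<Rightarrow> ('a set list \<Rightarrow> 'g::ab_group_add) set \<Rightarrow> ('a set list \<Rightarrow> 'g) set" where
  "hmap V U p k c = hclass U k (chmap V p k (SOME z. z \<in> c))"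

text \<open>Reduced Cech homology H_k(A;G): compatible families (threads) of homology classes
indexed by the finite open covers of A, compatible with all refinement projections.\<close>
definition cech :: "'a topology \<Rightarrow> 'a set \<Rightarrow> nat \<Rightarrow> ('a set set \<Rightarrow> ('a set list \<Rightarrow> 'g::ab_group_add) set) set" where
  "cech T A k = {h. (\<forall>U. \<not> ocover T A U \<longrightarrow> h U = {}) \<and>
                    (\<forall>U. ocover T A U \<longrightarrow> h U \<in> hgroup U k) \<and>
                    (\<forall>U V p. ocover T A U \<and> ocover T A V \<and> (\<forall>v\<in>V. p v \<in> U \<and> v \<subseteq> p v)
                        \<longrightarrow> hmap V U p k (h V) = h U)}"

definition czero :: "'a topology \<Rightarrow> 'a set \<Rightarrow> nat \<Rightarrow> ('a set set \<Rightarrow> ('a set list \<Rightarrow> 'g::ab_group_add) set)" where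
  "czero T A k = (\<lambda>U. if ocover T A U then bdries U k else {})"

definition incl :: "'a topology \<Rightarrow> 'a set \<Rightarrow> 'a set \<Rightarrow> nat \<Rightarrow> ('a set set \<Rightarrow> ('a set list \<Rightarrow> 'g::ab_group_add) set) \<Rightarrow> ('a set set \<Rightarrow> ('a set list \<Rightarrow> 'g) set)" where
  "incl T A B k \<gamma> = (\<lambda>U. if ocover T B U then
       hmap ((\<lambda>W. W \<inter> A) ` U) U (\<lambda>W. SOME W'. W' \<in> U \<and> W = W' \<inter> A) k (\<gamma> ((\<lambda>W. W \<inter> A) ` U))
     else {})"

definition HXG :: "'a topology \<Rightarrow> 'g::ab_group_add itself \<Rightarrow> nat set" where
  "HXG T G = {k. k \<ge> 1 \<and> (\<exists>F (\<gamma>::'a set set \<Rightarrow> ('a set list \<Rightarrow> 'g) set). closedin T F \<and>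
        \<gamma> \<in> cech T F (k - 1) \<and> \<gamma> \<noteq> czero T F (k - 1) \<and>
        incl T F (topspace T) (k - 1) \<gamma> = czero T (topspace T) (k - 1))}"

text \<open>K is an (n-1)-homology membrane spanned on B for \<gamma> \<in> H_{n-1}(B;G) (here k = n-1).\<close>
definition membrane :: "'a topology \<Rightarrow> 'a set \<Rightarrow> 'a set \<Rightarrow> nat \<Rightarrow> ('a set set \<Rightarrow> ('a set list \<Rightarrow> 'g::ab_group_add) set) \<Rightarrow> bool" where
  "membrane T B K k \<gamma> \<longleftrightarrow> closedin T B \<and> closedin T K \<and> B \<subseteq> K \<and>
     incl T B K k \<gamma> = czero T K k \<and>
     (\<forall>K'. closedin T K' \<and> B \<subseteq> K' \<and> K' \<subset> K \<longrightarrow> incl T B K' k \<gamma> \<noteq> czero T K' k)"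

end

theory Submission
  imports Defs
begin

text \<open>Take a closed \<open>F\<close> and a nontrivial class \<open>\<gamma>\<close> of degree \<open>n - 1\<close> on \<open>F\<close> that dies
  in \<open>X\<close>, and consider the closed sets \<open>K \<supseteq> F\<close> in which \<open>\<gamma>\<close> dies. A minimal such \<open>K\<close> is a
  membrane, and Zorn's lemma provides one as soon as the family is closed under intersections
  of chains. This is the continuity of Cech homology: a finite open cover of \<open>\<Inter>\<C>\<close> can be
  shrunk, inside the compact Hausdorff space, to open sets that cover some \<open>K \<in> \<C>\<close> without
  creating new simplices, so the nerve of the resulting cover of \<open>K\<close> maps simplicially onto
  the original nerve, compatibly with the traces on \<open>F\<close>. A class dying in the first nerve
  therefore dies in the second.\<close>

section \<open>Boundaries and chain maps of nerves\<close>

definition signed :: "nat \<Rightarrow> 'g::ab_group_add \<Rightarrow> 'g" where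
  "signed i x = (if even i then x else - x)"

lemma signed_zero [simp]: "signed i 0 = 0"
  by (simp add: signed_def)

lemma signed_sum: "signed i (sum f A) = (\<Sum>x\<in>A. signed i (f x))"
  by (simp add: signed_def sum_negf)

lemma signed_signed: "signed i (signed l x) = signed (i + l) x"
  by (auto simp: signed_def)

lemma signed_diff: "signed i (a - b) = signed i a - signed i b"
  by (simp add: signed_def)

lemma signed_pred_add: "0 < l \<Longrightarrow> signed (l - 1 + i) x = - signed (i + l) x"
  by (cases l) (auto simp: signed_def)

lemma bd_signed:
  "bd U k c = (\<lambda>t. \<Sum>i\<le>Suc k. \<Sum>s | nsimp U (Suc k) s \<and> del_at i s = t. signed i (c s))"
  by (simp add: bd_def signed_def)

lemma length_del_at: "i < length s \<Longrightarrow> length (del_at i s) = length s - 1"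
  by (simp add: del_at_def)

lemma nth_del_at:
  "i < length s \<Longrightarrow> m < length s - 1 \<Longrightarrow> del_at i s ! m = (if m < i then s ! m else s ! Suc m)"
  by (auto simp: del_at_def nth_append min_def)

lemma set_del_at: "set (del_at i s) \<subseteq> set s"
  by (auto simp: del_at_def dest: in_set_takeD in_set_dropD)

lemma map_del_at: "map f (del_at i s) = del_at i (map f s)"
  by (simp add: del_at_def take_map drop_map)

lemma del_at_del_at:
  "i < l \<Longrightarrow> l < length s \<Longrightarrow> del_at i (del_at l s) = del_at (l - 1) (del_at i s)"
  by (rule nth_equalityI) (auto simp: length_del_at nth_del_at)

lemma finite_nsimp: "finite U \<Longrightarrow> finite {s. nsimp U k s}"
  by (rule finite_subset[OF _ finite_lists_length_eq[of U "Suc k"]]) (auto simp: nsimp_def)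

lemma nsimp_del_at: "nsimp U (Suc k) s \<Longrightarrow> i \<le> Suc k \<Longrightarrow> nsimp U k (del_at i s)"
  using set_del_at[of i s] Inter_anti_mono[OF set_del_at[of i s]]
  by (auto simp: nsimp_def length_del_at)

definition simplicial :: "'a set set \<Rightarrow> 'a set set \<Rightarrow> ('a set \<Rightarrow> 'a set) \<Rightarrow> bool" where
  "simplicial V U f \<longleftrightarrow> (\<forall>k s. nsimp V k s \<longrightarrow> nsimp U k (map f s))"

lemma simplicial_refinement: "\<forall>v\<in>V. f v \<in> U \<and> v \<subseteq> f v \<Longrightarrow> simplicial V U f"
  unfolding simplicial_def nsimp_def by fastforce

lemma sum_fibers:
  assumes "finite {x. A x}" "finite {y. B y}" "\<And>x. A x \<Longrightarrow> B (g x)"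
  shows "(\<Sum>y | B y \<and> P y. \<Sum>x | A x \<and> g x = y. h x) = (\<Sum>x | A x \<and> P (g x). h x)"
proof -
  have "(\<Sum>x | A x \<and> P (g x). h x) = (\<Sum>y | B y \<and> P y. \<Sum>x | (A x \<and> P (g x)) \<and> g x = y. h x)"
    using sum.group[of "{x. A x \<and> P (g x)}" "{y. B y \<and> P y}" g h] assms
    by (simp add: image_subset_iff finite_subset[OF _ assms(1)] finite_subset[OF _ assms(2)])
  also have "\<dots> = (\<Sum>y | B y \<and> P y. \<Sum>x | A x \<and> g x = y. h x)"
    by (intro sum.cong refl arg_cong[where f="sum h"]) auto
  finally show ?thesis ..
qed

lemma double_sum_cancel:
  fixes h :: "nat \<Rightarrow> nat \<Rightarrow> 'g::ab_group_add"
  assumes "\<And>i l. i < l \<Longrightarrow> l \<le> Suc n \<Longrightarrow> h (l - 1) i = - h i l"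
  shows "(\<Sum>i\<le>n. \<Sum>l\<le>Suc n. h i l) = 0"
proof -
  define A where "A = {(i, l). i \<le> n \<and> l \<le> Suc n \<and> i < l}"
  define B where "B = {(i, l). i \<le> n \<and> l \<le> Suc n \<and> l \<le> i}"
  have "(\<Sum>i\<le>n. \<Sum>l\<le>Suc n. h i l) = (\<Sum>(i, l)\<in>{..n} \<times> {..Suc n}. h i l)"
    by (rule sum.cartesian_product)
  also have "{..n} \<times> {..Suc n} = A \<union> B"
    by (auto simp: A_def B_def)
  also have "(\<Sum>(i, l)\<in>A \<union> B. h i l) = (\<Sum>(i, l)\<in>A. h i l) + (\<Sum>(i, l)\<in>B. h i l)"
    by (rule sum.union_disjoint) (auto simp: A_def B_def intro: finite_subset[of _ "{..n} \<times> {..Suc n}"])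
  also have "(\<Sum>(i, l)\<in>B. h i l) = (\<Sum>(i, l)\<in>A. h (l - 1) i)"
  proof -
    have "bij_betw (\<lambda>(i, l). (l - 1, i)) A B"
      by (rule bij_betw_byWitness[where f'="\<lambda>(i, l). (l, i + 1)"]) (auto simp: A_def B_def)
    then show ?thesis
      by (simp add: sum.reindex_bij_betw[symmetric] case_prod_beta)
  qed
  also have "\<dots> = - (\<Sum>(i, l)\<in>A. h i l)"
    using assms by (simp add: sum_negf[symmetric] case_prod_beta A_def)
  finally show ?thesis
    by (simp only: add.right_inverse)
qed

lemma bd_bd:
  fixes c :: "'a set list \<Rightarrow> 'g::ab_group_add"
  assumes "finite U"
  shows "bd U j (bd U (Suc j) c) = (\<lambda>_. 0)"
proof
  fix t
  let ?S2 = "\<lambda>s. nsimp U (Suc (Suc j)) s"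
  have "bd U j (bd U (Suc j) c) t = (\<Sum>i\<le>Suc j. \<Sum>s | nsimp U (Suc j) s \<and> del_at i s = t.
      \<Sum>l\<le>Suc (Suc j). \<Sum>u | ?S2 u \<and> del_at l u = s. signed (i + l) (c u))"
    unfolding bd_signed[of U j] bd_signed[of U "Suc j"] by (simp only: signed_sum signed_signed)
  also have "\<dots> = (\<Sum>i\<le>Suc j. \<Sum>l\<le>Suc (Suc j).
      \<Sum>s | nsimp U (Suc j) s \<and> del_at i s = t. \<Sum>u | ?S2 u \<and> del_at l u = s. signed (i + l) (c u))"
    by (intro sum.cong refl) (rule sum.swap)
  also have "\<dots> = (\<Sum>i\<le>Suc j. \<Sum>l\<le>Suc (Suc j).
      \<Sum>u | ?S2 u \<and> del_at i (del_at l u) = t. signed (i + l) (c u))"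
    using finite_nsimp[OF assms] nsimp_del_at
    by (intro sum.cong refl sum_fibers) auto
  also have "\<dots> = 0"
  proof (rule double_sum_cancel)
    fix i l assume il: "i < l" "l \<le> Suc (Suc j)"
    have faces: "del_at i (del_at l u) = del_at (l - 1) (del_at i u)" if "?S2 u" for u
      using il that by (intro del_at_del_at) (auto simp: nsimp_def)
    have sign: "signed (l - 1 + i) x = - signed (i + l) x" for x :: 'g
      using il by (intro signed_pred_add) auto
    have "(\<Sum>u | ?S2 u \<and> del_at (l - 1) (del_at i u) = t. signed (l - 1 + i) (c u)) =
          (\<Sum>u | ?S2 u \<and> del_at i (del_at l u) = t. - signed (i + l) (c u))"
      unfolding sign using faces by (intro sum.cong) auto
    then show "(\<Sum>u | ?S2 u \<and> del_at (l - 1) (del_at i u) = t. signed (l - 1 + i) (c u)) =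
          - (\<Sum>u | ?S2 u \<and> del_at i (del_at l u) = t. signed (i + l) (c u))"
      by (simp only: sum_negf)
  qed
  finally show "bd U j (bd U (Suc j) c) t = 0" .
qed

lemma augmentation_bd:
  assumes "finite U"
  shows "(\<Sum>s | nsimp U 0 s. bd U 0 c s) = 0"
proof -
  have fibres: "(\<Sum>s | nsimp U 0 s. \<Sum>u | nsimp U (Suc 0) u \<and> del_at i u = s. signed i (c u)) =
      (\<Sum>u | nsimp U (Suc 0) u. signed i (c u))" if "i \<le> Suc 0" for i
    using that sum_fibers[where P="\<lambda>_. True" and A="nsimp U (Suc 0)" and B="nsimp U 0" and g="del_at i"]
      finite_nsimp[OF assms] nsimp_del_at[of U 0 _ i]
    by simp
  have "(\<Sum>s | nsimp U 0 s. bd U 0 c s) =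
      (\<Sum>i\<le>Suc 0. \<Sum>s | nsimp U 0 s. \<Sum>u | nsimp U (Suc 0) u \<and> del_at i u = s. signed i (c u))"
    unfolding bd_signed by (rule sum.swap)
  also have "\<dots> = (\<Sum>i\<le>Suc 0. \<Sum>u | nsimp U (Suc 0) u. signed i (c u))"
    using fibres by simp
  finally show ?thesis
    by (simp add: signed_def sum_negf)
qed

lemma bd_chains: "bd U k c \<in> chains U k"
proof -
  have "nsimp U k t" if nonzero: "bd U k c t \<noteq> 0" for t
  proof -
    obtain i where "i \<in> {..Suc k}" "(\<Sum>s | nsimp U (Suc k) s \<and> del_at i s = t. signed i (c s)) \<noteq> 0"
      using nonzero unfolding bd_signed by (rule sum.not_neutral_contains_not_neutral)
    moreover from this(2) obtain s where "s \<in> {s. nsimp U (Suc k) s \<and> del_at i s = t}"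
      by (rule sum.not_neutral_contains_not_neutral)
    ultimately show ?thesis
      using nsimp_del_at by auto
  qed
  then show ?thesis
    by (auto simp: chains_def)
qed

lemma bd_diff: "bd U k (\<lambda>s. c s - d s) = (\<lambda>t. bd U k c t - bd U k d t)"
  by (simp only: bd_signed signed_diff sum_subtractf)

lemma bd_zero: "bd U k (\<lambda>_. 0) = (\<lambda>_. 0)"
  by (simp only: bd_signed signed_zero sum.neutral_const)

lemma chains_zero: "(\<lambda>_. 0) \<in> chains U k"
  by (simp add: chains_def)

lemma chains_diff: "c \<in> chains U k \<Longrightarrow> d \<in> chains U k \<Longrightarrow> (\<lambda>s. c s - d s) \<in> chains U k"
proof -
  assume "c \<in> chains U k" "d \<in> chains U k"
  moreover have "c s \<noteq> 0 \<or> d s \<noteq> 0" if "c s - d s \<noteq> 0" for s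
    using that by auto
  ultimately show ?thesis
    by (auto simp: chains_def)
qed

lemma bdries_zero: "(\<lambda>_. 0) \<in> bdries U k"
  unfolding bdries_def using chains_zero by (rule image_eqI[where f="bd U k", OF bd_zero[symmetric]])

lemma bdries_diff:
  assumes "x \<in> bdries U k" "y \<in> bdries U k"
  shows "(\<lambda>s. x s - y s) \<in> bdries U k"
proof -
  obtain c d where cd: "c \<in> chains U (Suc k)" "d \<in> chains U (Suc k)" "x = bd U k c" "y = bd U k d"
    using assms by (auto simp: bdries_def)
  show ?thesis
    unfolding bdries_def
  proof (rule image_eqI)
    show "(\<lambda>s. x s - y s) = bd U k (\<lambda>s. c s - d s)"
      by (simp add: cd bd_diff)
    show "(\<lambda>s. c s - d s) \<in> chains U (Suc k)"
      using cd by (intro chains_diff)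
  qed
qed

lemma bdries_add:
  assumes "x \<in> bdries U k" "y \<in> bdries U k"
  shows "(\<lambda>s. x s + y s) \<in> bdries U k"
proof -
  have "(\<lambda>s. x s - (0 - y s)) \<in> bdries U k"
    by (intro bdries_diff bdries_zero assms)
  then show ?thesis
    by simp
qed

lemma bdries_subset_cycles:
  assumes "finite U"
  shows "bdries U k \<subseteq> (cycles U k :: ('a set list \<Rightarrow> 'g::ab_group_add) set)"
proof
  fix x :: "'a set list \<Rightarrow> 'g"
  assume "x \<in> bdries U k"
  then obtain c where "x = bd U k c"
    by (auto simp: bdries_def)
  then show "x \<in> cycles U k"
    by (cases k) (simp_all add: cycles_def bd_chains augmentation_bd[OF assms] bd_bd[OF assms])
qed

lemma chmap_chains:
  assumes "simplicial V U f"
  shows "chmap V f k c \<in> chains U k"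
proof -
  have "nsimp U k t" if nonzero: "chmap V f k c t \<noteq> 0" for t
  proof -
    obtain s where "s \<in> {s. nsimp V k s \<and> map f s = t}"
      using nonzero unfolding chmap_def by (rule sum.not_neutral_contains_not_neutral)
    then show ?thesis
      using assms by (auto simp: simplicial_def)
  qed
  then show ?thesis
    by (auto simp: chains_def)
qed

lemma chmap_diff: "chmap V f k (\<lambda>s. c s - d s) = (\<lambda>t. chmap V f k c t - chmap V f k d t)"
  by (simp only: chmap_def sum_subtractf)

lemma chmap_cong: "(\<And>s. nsimp V k s \<Longrightarrow> map f s = map g s) \<Longrightarrow> chmap V f k c = chmap V g k c"
  unfolding chmap_def by (intro ext sum.cong) auto

lemma chmap_comp:
  assumes "finite V" "finite U" "simplicial V U p"
  shows "chmap U q k (chmap V p k z) = chmap V (q \<circ> p) k z"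
proof
  fix t
  show "chmap U q k (chmap V p k z) t = chmap V (q \<circ> p) k z t"
    unfolding chmap_def map_map[symmetric]
    by (rule sum_fibers) (use assms finite_nsimp in \<open>auto simp: simplicial_def\<close>)
qed

lemma chmap_bd:
  assumes "finite V" "finite U" "simplicial V U f"
  shows "chmap V f k (bd V k c) = bd U k (chmap V f (Suc k) c)"
proof
  fix t
  have "chmap V f k (bd V k c) t = (\<Sum>i\<le>Suc k. \<Sum>s | nsimp V k s \<and> map f s = t.
      \<Sum>u | nsimp V (Suc k) u \<and> del_at i u = s. signed i (c u))"
    unfolding chmap_def bd_signed by (rule sum.swap)
  also have "\<dots> = (\<Sum>i\<le>Suc k. \<Sum>u | nsimp V (Suc k) u \<and> map f (del_at i u) = t. signed i (c u))"
    using assms finite_nsimp nsimp_del_at by (intro sum.cong refl sum_fibers) auto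
  also have "\<dots> = (\<Sum>i\<le>Suc k. \<Sum>u | nsimp V (Suc k) u \<and> del_at i (map f u) = t. signed i (c u))"
    by (simp only: map_del_at)
  also have "\<dots> = (\<Sum>i\<le>Suc k. \<Sum>w | nsimp U (Suc k) w \<and> del_at i w = t.
      \<Sum>u | nsimp V (Suc k) u \<and> map f u = w. signed i (c u))"
    using assms finite_nsimp by (intro sum.cong refl sum_fibers[symmetric]) (auto simp: simplicial_def)
  also have "\<dots> = bd U k (chmap V f (Suc k) c) t"
    by (simp only: bd_signed chmap_def signed_sum)
  finally show "chmap V f k (bd V k c) t = bd U k (chmap V f (Suc k) c) t" .
qed

lemma chmap_bdries:
  assumes "finite V" "finite U" "simplicial V U f" "x \<in> bdries V k"
  shows "chmap V f k x \<in> bdries U k"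
  using assms chmap_bd chmap_chains by (fastforce simp: bdries_def)

section \<open>Homology classes and inclusion-induced maps\<close>

lemma hclass_bdries:
  assumes "finite U" "w \<in> bdries U k"
  shows "hclass U k w = bdries U k"
proof
  show "hclass U k w \<subseteq> bdries U k"
    using bdries_add[OF _ assms(2)] by (fastforce simp: hclass_def)
  show "bdries U k \<subseteq> hclass U k w"
    using bdries_subset_cycles[OF assms(1)] bdries_diff[OF _ assms(2)] by (auto simp: hclass_def)
qed

lemma hclass_eq_bdriesD:
  assumes "hclass U k x = bdries U k"
  shows "x \<in> bdries U k"
proof -
  have "(\<lambda>_. 0) \<in> hclass U k x"
    using assms bdries_zero by blast
  then have "(\<lambda>s. 0 - x s) \<in> bdries U k"
    by (simp add: hclass_def)
  then show ?thesis
    using bdries_diff[OF bdries_zero] by fastforce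
qed

lemma some_in_hgroup:
  assumes "c \<in> hgroup U k"
  shows "(SOME z. z \<in> c) \<in> c"
proof -
  obtain z where "z \<in> cycles U k" "c = hclass U k z"
    using assms by (auto simp: hgroup_def)
  then have "z \<in> c"
    using bdries_zero[of U k] by (simp add: hclass_def)
  then show ?thesis
    by (rule someI[of "\<lambda>z. z \<in> c"])
qed

lemma hmap_eq_bdries:
  assumes "finite V" "finite U" "simplicial V U p" "c \<in> hgroup V k" "c = hclass V k y"
    and "chmap V p k y \<in> bdries U k"
  shows "hmap V U p k c = bdries U k"
proof -
  define z where "z = (SOME z. z \<in> c)"
  have "(\<lambda>s. z s - y s) \<in> bdries V k"
    using some_in_hgroup[OF assms(4)] assms(5) by (simp add: z_def hclass_def)
  then have "chmap V p k (\<lambda>s. z s - y s) \<in> bdries U k"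
    by (rule chmap_bdries[OF assms(1-3)])
  then have "(\<lambda>t. chmap V p k z t - chmap V p k y t) \<in> bdries U k"
    by (simp only: chmap_diff)
  from bdries_add[OF this assms(6)] have "chmap V p k z \<in> bdries U k"
    by simp
  then show ?thesis
    unfolding hmap_def z_def[symmetric] by (rule hclass_bdries[OF assms(2)])
qed

definition trace_rep :: "'a set set \<Rightarrow> 'a set \<Rightarrow> 'a set \<Rightarrow> 'a set" where
  "trace_rep U F v = (SOME W. W \<in> U \<and> v = W \<inter> F)"

lemma trace_rep_spec:
  assumes "v \<in> (\<lambda>W. W \<inter> F) ` U"
  shows "trace_rep U F v \<in> U" "v = trace_rep U F v \<inter> F"
  using someI_ex[of "\<lambda>W. W \<in> U \<and> v = W \<inter> F"] assms by (auto simp: trace_rep_def)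

lemma incl_cover:
  "ocover T B U \<Longrightarrow>
    incl T A B k \<gamma> U = hmap ((\<lambda>W. W \<inter> A) ` U) U (trace_rep U A) k (\<gamma> ((\<lambda>W. W \<inter> A) ` U))"
  by (simp add: incl_def trace_rep_def[abs_def])

lemma ocover_trace:
  assumes "ocover T K U" "F \<subseteq> K"
  shows "ocover T F ((\<lambda>W. W \<inter> F) ` U)"
proof -
  have "openin (subtopology T F) (W \<inter> F)" if "W \<in> U" for W
  proof -
    have "openin (subtopology T K) W"
      using assms(1) that by (simp add: ocover_def)
    then obtain G where "openin T G" "W = G \<inter> K"
      by (auto simp: openin_subtopology)
    then show ?thesis
      using assms(2) openin_subtopology by blast
  qed
  then show ?thesis
    using assms by (auto simp: ocover_def)
qed

text \<open>The last clause is needed because \<open>incl\<close> picks the representative of a trace by Hilbert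
  choice, so \<open>q Y\<close> must be that very representative.\<close>
definition trace_compatible :: "'a set \<Rightarrow> 'a set set \<Rightarrow> 'a set set \<Rightarrow> ('a set \<Rightarrow> 'a set) \<Rightarrow> bool" where
  "trace_compatible F U' U q \<longleftrightarrow> (\<forall>Y\<in>U'. q Y \<in> U) \<and> simplicial U' U q \<and>
     (\<forall>Y\<in>U'. Y \<inter> F \<noteq> {} \<longrightarrow> Y \<inter> F \<subseteq> q Y \<and> trace_rep U F (q Y \<inter> F) = q Y)"

lemma incl_vanishes_transfer:
  fixes \<gamma> :: "'a set set \<Rightarrow> ('a set list \<Rightarrow> 'g::ab_group_add) set"
  assumes \<gamma>: "\<gamma> \<in> cech T F k"
    and U': "ocover T K U'" "F \<subseteq> K" and U: "ocover T L U" "F \<subseteq> L"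
    and q: "trace_compatible F U' U q"
    and vanishes: "incl T F K k \<gamma> U' = czero T K k U'"
  shows "incl T F L k \<gamma> U = czero T L k U"
proof -
  define V where "V = (\<lambda>W. W \<inter> F) ` U"
  define V' where "V' = (\<lambda>W. W \<inter> F) ` U'"
  define p where "p = trace_rep U F"
  define p' where "p' = trace_rep U' F"
  \<comment> \<open>tracing \<open>q\<close> on \<open>F\<close> gives a refinement \<open>r\<close> of the trace covers with \<open>p \<circ> r = q \<circ> p'\<close>, so
    the two routes from the nerve of \<open>V'\<close> to the nerve of \<open>U\<close> agree\<close>
  define r where "r v = q (p' v) \<inter> F" for v
  have fin: "finite U" "finite U'" "finite V" "finite V'"
    using U U' by (auto simp: ocover_def V_def V'_def)
  have ocV: "ocover T F V" "ocover T F V'"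
    unfolding V_def V'_def using U U' by (auto intro: ocover_trace)
  have p: "p v \<in> U \<and> v = p v \<inter> F" if "v \<in> V" for v
    using trace_rep_spec[of v F U] that unfolding p_def V_def by blast
  have p': "p' v \<in> U' \<and> v = p' v \<inter> F" if "v \<in> V'" for v
    using trace_rep_spec[of v F U'] that unfolding p'_def V'_def by blast
  have r: "r v \<in> V \<and> v \<subseteq> r v" if "v \<in> V'" for v
    using p'[OF that] q by (auto simp: r_def V_def trace_compatible_def)
  have pr: "p (r v) = q (p' v)" if "v \<in> V'" "v \<noteq> {}" for v
    using p'[OF that(1)] that(2) q by (auto simp: p_def r_def trace_compatible_def)
  define z' where "z' = (SOME z. z \<in> \<gamma> V')"
  have "hclass U' k (chmap V' p' k z') = bdries U' k"
    using vanishes U' by (simp add: incl_cover czero_def hmap_def V'_def p'_def z'_def)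
  then have "chmap U' q k (chmap V' p' k z') \<in> bdries U k"
    using fin q by (intro chmap_bdries hclass_eq_bdriesD) (auto simp: trace_compatible_def)
  also have "chmap U' q k (chmap V' p' k z') = chmap V' (q \<circ> p') k z'"
    using p' by (intro chmap_comp fin simplicial_refinement) blast
  also have "\<dots> = chmap V' (p \<circ> r) k z'"
    using pr by (intro chmap_cong) (auto simp: nsimp_def)
  also have "\<dots> = chmap V p k (chmap V' r k z')"
    using r by (intro chmap_comp[symmetric] fin simplicial_refinement) blast
  finally have bdry: "chmap V p k (chmap V' r k z') \<in> bdries U k" .
  have "hmap V U p k (\<gamma> V) = bdries U k"
  proof (rule hmap_eq_bdries[OF fin(3,1) _ _ _ bdry])
    show "simplicial V U p"
      using p by (blast intro: simplicial_refinement)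
    show "\<gamma> V \<in> hgroup V k"
      using \<gamma> ocV by (simp add: cech_def)
    show "\<gamma> V = hclass V k (chmap V' r k z')"
      using \<gamma> ocV r unfolding cech_def hmap_def z'_def by blast
  qed
  then show ?thesis
    using U by (simp add: incl_cover czero_def V_def p_def)
qed

section \<open>Extending covers from the intersection of a chain\<close>

lemma compact_space_Inter_chain_nonempty:
  assumes "compact_space X" "\<And>K. K \<in> \<C> \<Longrightarrow> closedin X K" "{} \<notin> \<C>" "chain\<^sub>\<subseteq> \<C>"
  shows "\<Inter>\<C> \<noteq> {}"
proof -
  have "\<Inter>\<F> \<noteq> {}" if "finite \<F>" "\<F> \<subseteq> \<C>" for \<F>
  proof (cases "\<F> = {}")
    case False
    have "subset.chain UNIV \<F>"
      using assms(4) that(2) by (auto simp: chain_subset_def subset_chain_def)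
    then have "\<Inter>\<F> \<in> \<F>"
      using Inter_in_chain that(1) False by blast
    then show ?thesis
      using assms(3) that(2) by auto
  qed simp
  then show ?thesis
    using assms(2) by (intro compact_space_fip[THEN iffD1, OF assms(1), rule_format]) auto
qed

lemma compact_space_chain_disjoint_member:
  assumes "compact_space X" "\<C> \<noteq> {}" "\<And>K. K \<in> \<C> \<Longrightarrow> closedin X K" "chain\<^sub>\<subseteq> \<C>"
    and "closedin X Z" "Z \<inter> \<Inter>\<C> = {}"
  obtains K where "K \<in> \<C>" "Z \<inter> K = {}"
proof (rule ccontr)
  assume "\<not> thesis"
  then have "{} \<notin> (\<lambda>K. Z \<inter> K) ` \<C>"
    using that by auto
  moreover have "chain\<^sub>\<subseteq> ((\<lambda>K. Z \<inter> K) ` \<C>)"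
    using assms(4) by (auto simp: chain_subset_def)
  ultimately have "\<Inter>((\<lambda>K. Z \<inter> K) ` \<C>) \<noteq> {}"
    using assms(1,3,5) by (intro compact_space_Inter_chain_nonempty) auto
  then show False
    using assms(2,6) by auto
qed

lemma regular_space_compactin_shrinking:
  assumes "regular_space X" "compactin X K" "\<And>i. i \<in> I \<Longrightarrow> openin X (G i)" "K \<subseteq> (\<Union>i\<in>I. G i)"
  obtains S where "\<And>i. openin X (S i)" "\<And>i. i \<in> I \<Longrightarrow> X closure_of S i \<subseteq> G i"
    "K \<subseteq> (\<Union>i\<in>I. S i)"
proof -
  have "\<forall>x\<in>K. \<exists>i N. i \<in> I \<and> openin X N \<and> x \<in> N \<and> X closure_of N \<subseteq> G i"
  proof
    fix x assume x: "x \<in> K"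
    obtain i where i: "i \<in> I" "x \<in> G i"
      using assms(4) x by blast
    moreover have "neighbourhood_base_of (closedin X) X"
      using assms(1) by (simp add: neighbourhood_base_of_closedin)
    ultimately obtain N E where N: "openin X N" "x \<in> N" and E: "closedin X E" "N \<subseteq> E" "E \<subseteq> G i"
      using assms(3) unfolding neighbourhood_base_of by meson
    have "X closure_of N \<subseteq> G i"
      using closure_of_minimal[OF E(2,1)] E(3) by blast
    then show "\<exists>i N. i \<in> I \<and> openin X N \<and> x \<in> N \<and> X closure_of N \<subseteq> G i"
      using i N by blast
  qed
  from bchoice[OF this] obtain \<iota>
    where "\<forall>x\<in>K. \<exists>N. \<iota> x \<in> I \<and> openin X N \<and> x \<in> N \<and> X closure_of N \<subseteq> G (\<iota> x)" ..
  from bchoice[OF this] obtain N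
    where "\<forall>x\<in>K. \<iota> x \<in> I \<and> openin X (N x) \<and> x \<in> N x \<and> X closure_of N x \<subseteq> G (\<iota> x)" ..
  then have nbhd: "\<And>x. x \<in> K \<Longrightarrow> \<iota> x \<in> I \<and> openin X (N x) \<and> x \<in> N x \<and>
      X closure_of N x \<subseteq> G (\<iota> x)"
    by blast
  have "\<exists>\<F>. finite \<F> \<and> \<F> \<subseteq> N ` K \<and> K \<subseteq> \<Union>\<F>"
    using nbhd by (intro compactinD[OF assms(2)]) auto
  then obtain \<F> where "finite \<F>" "\<F> \<subseteq> N ` K" "K \<subseteq> \<Union>\<F>"
    by blast
  moreover from this obtain Xf where "Xf \<subseteq> K" "finite Xf" "\<F> = N ` Xf"
    by (meson finite_subset_image)
  ultimately have Xf: "finite Xf" "Xf \<subseteq> K" "K \<subseteq> \<Union>(N ` Xf)"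
    by auto
  show thesis
  proof
    let ?S = "\<lambda>i. \<Union>(N ` {x \<in> Xf. \<iota> x = i})"
    show "openin X (?S i)" for i
      using nbhd Xf by (intro openin_Union) auto
    show "X closure_of ?S i \<subseteq> G i" for i
      using nbhd Xf by (subst closure_of_Union) auto
    show "K \<subseteq> (\<Union>i\<in>I. ?S i)"
    proof
      fix x assume "x \<in> K"
      then obtain x' where "x' \<in> Xf" "x \<in> N x'"
        using Xf by blast
      then show "x \<in> (\<Union>i\<in>I. ?S i)"
        using nbhd Xf by (intro UN_I[of "\<iota> x'"]) auto
    qed
  qed
qed

lemma chain_member_avoiding_new_intersections:
  assumes "compact_space X"
    and \<C>: "\<C> \<noteq> {}" "\<And>K. K \<in> \<C> \<Longrightarrow> closedin X K" "chain\<^sub>\<subseteq> \<C>"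
    and "finite \<W>" and D: "\<And>W. closedin X (D W)" "\<And>W. W \<in> \<W> \<Longrightarrow> D W \<inter> \<Inter>\<C> \<subseteq> W"
    and S: "\<And>W. openin X (S W)" "\<Inter>\<C> \<subseteq> (\<Union>W\<in>\<W>. S W)"
  obtains K where "K \<in> \<C>" "K \<subseteq> (\<Union>W\<in>\<W>. S W)"
    "\<And>\<S>. \<S> \<subseteq> \<W> \<Longrightarrow> \<S> \<noteq> {} \<Longrightarrow> K \<inter> (\<Inter>W\<in>\<S>. D W) \<noteq> {} \<Longrightarrow> \<Inter>\<S> \<noteq> {}"
proof -
  \<comment> \<open>the points left uncovered, or at which a subfamily of \<open>\<W>\<close> with empty intersection
    acquires a common point of the \<open>D W\<close>\<close>
  define Z where "Z = (topspace X - (\<Union>W\<in>\<W>. S W)) \<union>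
    (\<Union>\<S>\<in>{\<S>. \<S> \<subseteq> \<W> \<and> \<S> \<noteq> {} \<and> \<Inter>\<S> = {}}. \<Inter>W\<in>\<S>. D W)"
  have "closedin X Z"
    unfolding Z_def using S(1) D(1) \<open>finite \<W>\<close>
    by (intro closedin_Un closedin_diff closedin_Union closedin_Inter openin_Union) auto
  moreover have "Z \<inter> \<Inter>\<C> = {}"
  proof -
    have "x \<notin> Z" if x: "x \<in> \<Inter>\<C>" for x
    proof
      assume "x \<in> Z"
      then have "x \<in> (\<Union>\<S>\<in>{\<S>. \<S> \<subseteq> \<W> \<and> \<S> \<noteq> {} \<and> \<Inter>\<S> = {}}. \<Inter>W\<in>\<S>. D W)"
        using S(2) x by (auto simp: Z_def)
      then obtain \<S> where \<S>: "\<S> \<subseteq> \<W>" "\<Inter>\<S> = {}" and "\<And>W. W \<in> \<S> \<Longrightarrow> x \<in> D W"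
        by blast
      then have "x \<in> W" if "W \<in> \<S>" for W
        using D(2)[of W] x that by blast
      then show False
        using \<S>(2) by blast
    qed
    then show ?thesis
      by blast
  qed
  ultimately obtain K where K: "K \<in> \<C>" "Z \<inter> K = {}"
    using compact_space_chain_disjoint_member[OF assms(1) \<C>] by blast
  show thesis
  proof
    show "K \<in> \<C>"
      by (fact K)
    have "topspace X - (\<Union>W\<in>\<W>. S W) \<subseteq> Z"
      by (simp add: Z_def)
    then show "K \<subseteq> (\<Union>W\<in>\<W>. S W)"
      using K closedin_subset[OF \<C>(2)[OF K(1)]] by blast
    show "\<Inter>\<S> \<noteq> {}" if \<S>: "\<S> \<subseteq> \<W>" "\<S> \<noteq> {}" "K \<inter> (\<Inter>W\<in>\<S>. D W) \<noteq> {}" for \<S>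
    proof
      assume "\<Inter>\<S> = {}"
      have "(\<Inter>W\<in>\<S>. D W) \<subseteq> Z"
        unfolding Z_def by (rule le_supI2, rule UN_upper) (use \<S> \<open>\<Inter>\<S> = {}\<close> in blast)
      then show False
        using K(2) \<S>(3) by blast
    qed
  qed
qed

lemma chain_member_nerve_cover:
  assumes X: "compact_space X" "Hausdorff_space X"
    and \<C>: "\<C> \<noteq> {}" "\<And>K. K \<in> \<C> \<Longrightarrow> closedin X K" "chain\<^sub>\<subseteq> \<C>"
    and \<W>: "finite \<W>" "\<And>W. W \<in> \<W> \<Longrightarrow> openin (subtopology X (\<Inter>\<C>)) W" "\<Inter>\<C> \<subseteq> \<Union>\<W>"
  obtains K S where "K \<in> \<C>" "\<And>W. openin X (S W)" "\<And>W. W \<in> \<W> \<Longrightarrow> S W \<inter> \<Inter>\<C> \<subseteq> W"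
    "K \<subseteq> (\<Union>W\<in>\<W>. S W)"
    "\<And>\<S>. \<S> \<subseteq> \<W> \<Longrightarrow> \<S> \<noteq> {} \<Longrightarrow> K \<inter> (\<Inter>W\<in>\<S>. S W) \<noteq> {} \<Longrightarrow> \<Inter>\<S> \<noteq> {}"
proof -
  let ?K0 = "\<Inter>\<C>"
  have "compactin X ?K0"
    using \<C> by (intro closedin_compact_space[OF X(1)] closedin_Inter) auto
  have "\<forall>W\<in>\<W>. \<exists>G. openin X G \<and> W = G \<inter> ?K0"
    using \<W>(2) by (auto simp: openin_subtopology)
  from bchoice[OF this] obtain G where G: "\<And>W. W \<in> \<W> \<Longrightarrow> openin X (G W) \<and> W = G W \<inter> ?K0"
    by blast
  have "?K0 \<subseteq> (\<Union>W\<in>\<W>. G W)"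
    using \<W>(3) G by blast
  with G obtain S where S: "\<And>W. openin X (S W)" "\<And>W. W \<in> \<W> \<Longrightarrow> X closure_of S W \<subseteq> G W"
    "?K0 \<subseteq> (\<Union>W\<in>\<W>. S W)"
    using regular_space_compactin_shrinking[OF compact_Hausdorff_imp_regular_space[OF X]
        \<open>compactin X ?K0\<close>, of \<W> G]
    by blast
  have closure_trace: "X closure_of S W \<inter> ?K0 \<subseteq> W" if "W \<in> \<W>" for W
    using G[OF that] S(2)[OF that] by blast
  have S_closure: "S W \<subseteq> X closure_of S W" for W
    using closure_of_subset[OF openin_subset[OF S(1)]] .
  obtain K where K: "K \<in> \<C>" "K \<subseteq> (\<Union>W\<in>\<W>. S W)" and nerve:
    "\<And>\<S>. \<S> \<subseteq> \<W> \<Longrightarrow> \<S> \<noteq> {} \<Longrightarrow> K \<inter> (\<Inter>W\<in>\<S>. X closure_of S W) \<noteq> {} \<Longrightarrow> \<Inter>\<S> \<noteq> {}"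
    using chain_member_avoiding_new_intersections[OF X(1) \<C> \<W>(1) closedin_closure_of closure_trace
        S(1,3)]
    by blast
  show thesis
  proof
    show "K \<in> \<C>" "K \<subseteq> (\<Union>W\<in>\<W>. S W)"
      by (fact K)+
    show "openin X (S W)" for W
      by (fact S(1))
    show "S W \<inter> ?K0 \<subseteq> W" if "W \<in> \<W>" for W
      using closure_trace[OF that] S_closure by blast
    show "\<Inter>\<S> \<noteq> {}" if "\<S> \<subseteq> \<W>" "\<S> \<noteq> {}" "K \<inter> (\<Inter>W\<in>\<S>. S W) \<noteq> {}" for \<S>
      using nerve[OF that(1,2)] that(3) S_closure by blast
  qed
qed

text \<open>A refinement of \<open>U\<close> whose members meeting \<open>F\<close> are exactly the trace representatives
  chosen by \<open>incl\<close>.\<close>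
definition trace_canonical :: "'a set set \<Rightarrow> 'a set \<Rightarrow> 'a set set" where
  "trace_canonical U F = trace_rep U F ` (\<lambda>W. W \<inter> F) ` U \<union> (\<lambda>W. W - F) ` U"

lemma finite_trace_canonical: "finite U \<Longrightarrow> finite (trace_canonical U F)"
  by (simp add: trace_canonical_def)

lemma openin_trace_canonical:
  assumes U: "ocover X L U" and F: "closedin X F" and W: "W \<in> trace_canonical U F"
  shows "openin (subtopology X L) W"
  using W unfolding trace_canonical_def
proof
  have open_U: "openin (subtopology X L) W" if "W \<in> U" for W
    using U that by (simp add: ocover_def)
  {
    assume "W \<in> trace_rep U F ` (\<lambda>W. W \<inter> F) ` U"
    then obtain v where v: "W = trace_rep U F v" "v \<in> (\<lambda>W. W \<inter> F) ` U"
      by (rule imageE)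
    then show ?thesis
      using open_U[OF trace_rep_spec(1)[OF v(2)]] by simp
  next
    assume "W \<in> (\<lambda>W. W - F) ` U"
    then obtain W0 where "W = W0 - F" "W0 \<in> U"
      by (rule imageE)
    moreover have "W0 \<subseteq> L"
      using openin_subset[OF open_U[OF \<open>W0 \<in> U\<close>]] by auto
    ultimately have W0: "W0 \<in> U" "W = W0 - (F \<inter> L)"
      by auto
    have "closedin (subtopology X L) (F \<inter> L)"
      using F by (auto simp: closedin_subtopology)
    then show ?thesis
      using W0 open_U by (simp add: openin_diff)
  }
qed

lemma trace_canonical_covers: "\<Union>U \<subseteq> \<Union>(trace_canonical U F)"
proof
  fix x assume "x \<in> \<Union>U"
  then obtain W where W: "W \<in> U" "x \<in> W"
    by blast
  show "x \<in> \<Union>(trace_canonical U F)"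
  proof (cases "x \<in> F")
    case True
    have "W \<inter> F \<in> (\<lambda>W. W \<inter> F) ` U"
      using W(1) by blast
    then have "x \<in> trace_rep U F (W \<inter> F)" "trace_rep U F (W \<inter> F) \<in> trace_canonical U F"
      using trace_rep_spec(2)[of "W \<inter> F" F U] True W(2) by (auto simp: trace_canonical_def)
    then show ?thesis
      by blast
  next
    case False
    then have "x \<in> W - F" "W - F \<in> trace_canonical U F"
      using W by (auto simp: trace_canonical_def)
    then show ?thesis
      by blast
  qed
qed

lemma trace_canonical_refines:
  assumes "W \<in> trace_canonical U F"
  shows "\<exists>W'\<in>U. W \<subseteq> W'"
  using assms unfolding trace_canonical_def
proof
  assume "W \<in> trace_rep U F ` (\<lambda>W. W \<inter> F) ` U"
  then obtain v where "W = trace_rep U F v" "v \<in> (\<lambda>W. W \<inter> F) ` U"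
    by (rule imageE)
  then show ?thesis
    using trace_rep_spec(1) by blast
next
  assume "W \<in> (\<lambda>W. W - F) ` U"
  then show ?thesis
    by blast
qed

lemma trace_canonical_meets:
  assumes "W \<in> trace_canonical U F" "W \<inter> F \<noteq> {}"
  shows "W \<in> U" "trace_rep U F (W \<inter> F) = W"
proof -
  have "W \<notin> (\<lambda>W. W - F) ` U"
    using assms(2) by blast
  then have "W \<in> trace_rep U F ` (\<lambda>W. W \<inter> F) ` U"
    using assms(1) by (simp add: trace_canonical_def)
  then obtain v where v: "W = trace_rep U F v" "v \<in> (\<lambda>W. W \<inter> F) ` U"
    by (rule imageE)
  then show "W \<in> U"
    using trace_rep_spec(1) by blast
  have "W \<inter> F = v"
    using trace_rep_spec(2)[OF v(2)] v(1) by simp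
  then show "trace_rep U F (W \<inter> F) = W"
    using v(1) by simp
qed

lemma simplicial_shrunk_cover:
  assumes \<sigma>: "\<And>Y. Y \<in> U' \<Longrightarrow> \<sigma> Y \<in> \<W> \<and> Y = S (\<sigma> Y) \<inter> K"
    and \<iota>: "\<And>W. W \<in> \<W> \<Longrightarrow> \<iota> W \<in> U \<and> W \<subseteq> \<iota> W"
    and nerve: "\<And>\<S>. \<S> \<subseteq> \<W> \<Longrightarrow> \<S> \<noteq> {} \<Longrightarrow> K \<inter> (\<Inter>W\<in>\<S>. S W) \<noteq> {} \<Longrightarrow> \<Inter>\<S> \<noteq> {}"
  shows "simplicial U' U (\<iota> \<circ> \<sigma>)"
  unfolding simplicial_def nsimp_def
proof (intro allI impI conjI)
  fix k s assume s: "length s = Suc k \<and> set s \<subseteq> U' \<and> \<Inter>(set s) \<noteq> {}"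
  show "length (map (\<iota> \<circ> \<sigma>) s) = Suc k"
    using s by simp
  show "set (map (\<iota> \<circ> \<sigma>) s) \<subseteq> U"
    using s \<sigma> \<iota> by auto
  have "set s \<noteq> {}"
    using s by auto
  then have sub: "\<sigma> ` set s \<subseteq> \<W>" and ne: "\<sigma> ` set s \<noteq> {}"
    using s \<sigma> by auto
  have "\<Inter>(set s) \<subseteq> K \<inter> (\<Inter>W\<in>\<sigma> ` set s. S W)"
  proof
    fix x assume x: "x \<in> \<Inter>(set s)"
    have xY: "x \<in> S (\<sigma> Y) \<inter> K" if "Y \<in> set s" for Y
      using x that \<sigma>[of Y] s by auto
    obtain Y0 where "Y0 \<in> set s"
      using \<open>set s \<noteq> {}\<close> by (meson ex_in_conv)
    then show "x \<in> K \<inter> (\<Inter>W\<in>\<sigma> ` set s. S W)"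
      using xY by auto
  qed
  then have "K \<inter> (\<Inter>W\<in>\<sigma> ` set s. S W) \<noteq> {}"
    using s by blast
  then have "\<Inter>(\<sigma> ` set s) \<noteq> {}"
    by (rule nerve[OF sub ne])
  moreover have "\<sigma> Y \<subseteq> \<iota> (\<sigma> Y)" if "Y \<in> set s" for Y
    using that s \<sigma> \<iota> by blast
  then have "\<Inter>(\<sigma> ` set s) \<subseteq> \<Inter>(set (map (\<iota> \<circ> \<sigma>) s))"
    by auto
  ultimately show "\<Inter>(set (map (\<iota> \<circ> \<sigma>) s)) \<noteq> {}"
    by blast
qed

lemma chain_member_trace_compatible_cover:
  assumes X: "compact_space X" "Hausdorff_space X"
    and \<C>: "\<C> \<noteq> {}" "\<And>K. K \<in> \<C> \<Longrightarrow> closedin X K" "chain\<^sub>\<subseteq> \<C>"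
    and F: "closedin X F" "F \<subseteq> \<Inter>\<C>" and U: "ocover X (\<Inter>\<C>) U"
  obtains K U' q where "K \<in> \<C>" "ocover X K U'" "trace_compatible F U' U q"
proof -
  let ?\<W> = "trace_canonical U F"
  have \<W>: "finite ?\<W>" "\<And>W. W \<in> ?\<W> \<Longrightarrow> openin (subtopology X (\<Inter>\<C>)) W" "\<Inter>\<C> \<subseteq> \<Union>?\<W>"
    using U openin_trace_canonical[OF U F(1)] trace_canonical_covers[of U F]
    by (auto simp: ocover_def finite_trace_canonical)
  obtain K S where "K \<in> \<C>" and S: "\<And>W. openin X (S W)"
    "\<And>W. W \<in> ?\<W> \<Longrightarrow> S W \<inter> \<Inter>\<C> \<subseteq> W" and "K \<subseteq> (\<Union>W\<in>?\<W>. S W)"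
    and nerve: "\<And>\<S>. \<S> \<subseteq> ?\<W> \<Longrightarrow> \<S> \<noteq> {} \<Longrightarrow> K \<inter> (\<Inter>W\<in>\<S>. S W) \<noteq> {} \<Longrightarrow> \<Inter>\<S> \<noteq> {}"
    using chain_member_nerve_cover[OF X \<C> \<W>] by blast
  define \<iota> where "\<iota> W = (if W \<in> U then W else SOME W'. W' \<in> U \<and> W \<subseteq> W')" for W
  have \<iota>: "\<iota> W \<in> U \<and> W \<subseteq> \<iota> W" if "W \<in> ?\<W>" for W
    using trace_canonical_refines[OF that] someI_ex[of "\<lambda>W'. W' \<in> U \<and> W \<subseteq> W'"]
    by (auto simp: \<iota>_def)
  define U' where "U' = (\<lambda>W. S W \<inter> K) ` ?\<W>"
  define \<sigma> where "\<sigma> Y = (SOME W. W \<in> ?\<W> \<and> Y = S W \<inter> K)" for Y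
  have \<sigma>: "\<sigma> Y \<in> ?\<W> \<and> Y = S (\<sigma> Y) \<inter> K" if "Y \<in> U'" for Y
    using that someI_ex[of "\<lambda>W. W \<in> ?\<W> \<and> Y = S W \<inter> K"] by (auto simp: U'_def \<sigma>_def)
  show thesis
  proof
    show "K \<in> \<C>"
      by fact
    show "ocover X K U'"
      unfolding ocover_def U'_def using \<W>(1) S(1) \<open>K \<subseteq> (\<Union>W\<in>?\<W>. S W)\<close>
      by (auto intro: openin_subtopology_Int)
    show "trace_compatible F U' U (\<iota> \<circ> \<sigma>)"
      unfolding trace_compatible_def
    proof (intro conjI ballI impI)
      show "(\<iota> \<circ> \<sigma>) Y \<in> U" if "Y \<in> U'" for Y
        using \<sigma>[OF that] \<iota> by simp
      show "simplicial U' U (\<iota> \<circ> \<sigma>)"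
        using \<sigma> \<iota> nerve by (rule simplicial_shrunk_cover)
      fix Y assume Y: "Y \<in> U'" "Y \<inter> F \<noteq> {}"
      have W: "\<sigma> Y \<in> ?\<W>" "Y = S (\<sigma> Y) \<inter> K"
        using \<sigma>[OF Y(1)] by auto
      then have "Y \<inter> F \<subseteq> \<sigma> Y"
        using S(2)[of "\<sigma> Y"] F(2) by blast
      moreover from this have "\<sigma> Y \<inter> F \<noteq> {}"
        using Y(2) by blast
      then have "\<iota> (\<sigma> Y) = \<sigma> Y" "trace_rep U F (\<sigma> Y \<inter> F) = \<sigma> Y"
        using trace_canonical_meets[OF W(1)] by (auto simp: \<iota>_def)
      ultimately show "Y \<inter> F \<subseteq> (\<iota> \<circ> \<sigma>) Y" "trace_rep U F ((\<iota> \<circ> \<sigma>) Y \<inter> F) = (\<iota> \<circ> \<sigma>) Y"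
        by simp_all
    qed
  qed
qed

lemma incl_vanishes_Inter_chain:
  fixes \<gamma> :: "'a set set \<Rightarrow> ('a set list \<Rightarrow> 'g::ab_group_add) set"
  assumes X: "compact_space X" "Hausdorff_space X"
    and F: "closedin X F" and \<gamma>: "\<gamma> \<in> cech X F k"
    and \<C>: "\<C> \<noteq> {}" "chain\<^sub>\<subseteq> \<C>"
    and vanishes: "\<And>K. K \<in> \<C> \<Longrightarrow> closedin X K \<and> F \<subseteq> K \<and> incl X F K k \<gamma> = czero X K k"
  shows "incl X F (\<Inter>\<C>) k \<gamma> = czero X (\<Inter>\<C>) k"
proof
  fix U
  show "incl X F (\<Inter>\<C>) k \<gamma> U = czero X (\<Inter>\<C>) k U"
  proof (cases "ocover X (\<Inter>\<C>) U")
    case False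
    then show ?thesis
      by (simp add: incl_def czero_def)
  next
    case True
    have closed: "\<And>K. K \<in> \<C> \<Longrightarrow> closedin X K" and "F \<subseteq> \<Inter>\<C>"
      using vanishes by auto
    have "\<exists>K U' q. K \<in> \<C> \<and> ocover X K U' \<and> trace_compatible F U' U q"
      by (rule chain_member_trace_compatible_cover[OF X \<C>(1) closed \<C>(2) F \<open>F \<subseteq> \<Inter>\<C>\<close> True])
        blast+
    then obtain K U' q where K: "K \<in> \<C>" and U': "ocover X K U'" and q: "trace_compatible F U' U q"
      by blast
    have "F \<subseteq> K" "incl X F K k \<gamma> U' = czero X K k U'"
      using vanishes[OF K] by auto
    then show ?thesis
      by (intro incl_vanishes_transfer[OF \<gamma> U' _ True \<open>F \<subseteq> \<Inter>\<C>\<close> q])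
  qed
qed

section \<open>Minimal membranes\<close>

lemma subset_Zorn_nonempty_minimal:
  assumes "\<A> \<noteq> {}" and "\<And>\<C>. \<C> \<noteq> {} \<Longrightarrow> \<C> \<subseteq> \<A> \<Longrightarrow> chain\<^sub>\<subseteq> \<C> \<Longrightarrow> \<Inter>\<C> \<in> \<A>"
  obtains M where "M \<in> \<A>" "\<And>X. X \<in> \<A> \<Longrightarrow> X \<subseteq> M \<Longrightarrow> X = M"
proof -
  have "\<exists>M\<in>uminus ` \<A>. \<forall>X\<in>uminus ` \<A>. M \<subseteq> X \<longrightarrow> X = M"
  proof (rule subset_Zorn_nonempty)
    show "uminus ` \<A> \<noteq> {}"
      using assms(1) by blast
    fix \<C> assume "\<C> \<noteq> {}" "subset.chain (uminus ` \<A>) \<C>"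
    then have "uminus ` \<C> \<noteq> {}" "uminus ` \<C> \<subseteq> \<A>" "chain\<^sub>\<subseteq> (uminus ` \<C>)"
      by (auto simp: subset_chain_def chain_subset_def)
    then have "\<Inter>(uminus ` \<C>) \<in> \<A>"
      by (rule assms(2))
    moreover have "\<Union>\<C> = - \<Inter>(uminus ` \<C>)"
      by auto
    ultimately show "\<Union>\<C> \<in> uminus ` \<A>"
      by (simp only:) (rule imageI)
  qed
  then obtain M' where "M' \<in> uminus ` \<A>" and max: "\<forall>X\<in>uminus ` \<A>. M' \<subseteq> X \<longrightarrow> X = M'"
    by (rule bexE)
  from \<open>M' \<in> uminus ` \<A>\<close> obtain M where "M' = - M" "M \<in> \<A>"
    by (rule imageE)
  show thesis
  proof (rule that)
    show "M \<in> \<A>"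
      by fact
    show "X = M" if "X \<in> \<A>" "X \<subseteq> M" for X
    proof -
      have "- X = - M"
        using max that \<open>M' = - M\<close> by auto
      then show ?thesis
        by simp
    qed
  qed
qed

lemma exists_membrane:
  fixes \<gamma> :: "'a set set \<Rightarrow> ('a set list \<Rightarrow> 'g::ab_group_add) set"
  assumes X: "compact_space X" "Hausdorff_space X"
    and F: "closedin X F" and \<gamma>: "\<gamma> \<in> cech X F k"
    and L: "closedin X L" "F \<subseteq> L" "incl X F L k \<gamma> = czero X L k"
  obtains K where "K \<subseteq> L" "membrane X F K k \<gamma>"
proof -
  define \<K> where "\<K> = {K. closedin X K \<and> F \<subseteq> K \<and> incl X F K k \<gamma> = czero X K k \<and> K \<subseteq> L}"
  have "L \<in> \<K>"
    using L by (simp add: \<K>_def)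
  then have "\<K> \<noteq> {}"
    by blast
  moreover have "\<Inter>\<C> \<in> \<K>" if \<C>: "\<C> \<noteq> {}" "\<C> \<subseteq> \<K>" "chain\<^sub>\<subseteq> \<C>" for \<C>
  proof -
    have members: "closedin X K \<and> F \<subseteq> K \<and> incl X F K k \<gamma> = czero X K k" if "K \<in> \<C>" for K
      using that \<C>(2) by (auto simp: \<K>_def)
    then have "closedin X (\<Inter>\<C>)" "F \<subseteq> \<Inter>\<C>"
      using \<C>(1) by auto
    moreover have "\<Inter>\<C> \<subseteq> L"
      using \<C>(1,2) by (auto simp: \<K>_def)
    moreover have "incl X F (\<Inter>\<C>) k \<gamma> = czero X (\<Inter>\<C>) k"
      by (rule incl_vanishes_Inter_chain[OF X F \<gamma> \<C>(1,3) members])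
    ultimately show ?thesis
      by (simp add: \<K>_def)
  qed
  ultimately obtain K where K: "K \<in> \<K>" and minimal: "\<And>K'. K' \<in> \<K> \<Longrightarrow> K' \<subseteq> K \<Longrightarrow> K' = K"
    by (rule subset_Zorn_nonempty_minimal) blast+
  show thesis
  proof
    show "K \<subseteq> L"
      using K by (simp add: \<K>_def)
    show "membrane X F K k \<gamma>"
      unfolding membrane_def
    proof (intro conjI allI impI)
      show "closedin X F" "closedin X K" "F \<subseteq> K" "incl X F K k \<gamma> = czero X K k"
        using F K by (auto simp: \<K>_def)
      show "incl X F K' k \<gamma> \<noteq> czero X K' k" if K': "closedin X K' \<and> F \<subseteq> K' \<and> K' \<subset> K" for K'
      proof
        assume "incl X F K' k \<gamma> = czero X K' k"
        then have "K' \<in> \<K>"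
          using K K' by (auto simp: \<K>_def)
        then show False
          using minimal[of K'] K' by blast
      qed
    qed
  qed
qed

theorem corollary2p7:
  fixes T :: "'a topology" and n :: nat
  assumes "Hausdorff_space T" and "compact_space T"
    and "n \<in> HXG T TYPE('g::ab_group_add)"
  shows "\<exists>F K. closedin T F \<and> closedin T K \<and> F \<subseteq> K \<and>
           (\<exists>\<gamma>::'a set set \<Rightarrow> ('a set list \<Rightarrow> 'g) set.
              \<gamma> \<in> cech T F (n - 1) \<and> \<gamma> \<noteq> czero T F (n - 1) \<and> membrane T F K (n - 1) \<gamma>)"
proof -
  obtain F and \<gamma> :: "'a set set \<Rightarrow> ('a set list \<Rightarrow> 'g) set" where F: "closedin T F"
    and \<gamma>: "\<gamma> \<in> cech T F (n - 1)" "\<gamma> \<noteq> czero T F (n - 1)"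
    and dies: "incl T F (topspace T) (n - 1) \<gamma> = czero T (topspace T) (n - 1)"
    using assms(3) unfolding HXG_def by blast
  obtain K where "membrane T F K (n - 1) \<gamma>"
    using exists_membrane[OF assms(2,1) F \<gamma>(1) closedin_topspace closedin_subset[OF F] dies] by blast
  moreover from this have "closedin T K" "F \<subseteq> K"
    by (simp_all add: membrane_def)
  ultimately show ?thesis
    using F \<gamma> by blast
qed

end
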